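(* For each $X\in\{\mathrm{B_{ii}},\mathrm{B_{vi}},\mathrm{H_{ii}},\mathrm{H_{iii}}\}$, let $G_X$ be the group with generators $a,b,c$ and relations $\mathrm{B_{ii}}$: $ababab=bababa,\ bc=ab,\ ac=ca$; $\mathrm{B_{vi}}$: $aba=bab,\ aca=bac,\ acaca=cacac$; $\mathrm{H_{ii}}$: $abab=baba,\ aca=bac,\ acaca=cacac$; $\mathrm{H_{iii}}$: $aba=bab,\ bcba=cbac,\ cba=acb$; and let $G_X^+$ be the submonoid generated by $a,b,c$. If $\Delta\in G_X^+$ is quasi-central with associated permutation $\sigma$ of $\{a,b,c\}$, i.e. $x\Delta=\Delta\sigma(x)$ for all $x\in\{a,b,c\}$, then $\sigma$ is the identity. That is, $\sigma(\mathcal{QZ}(G_X^+))$ consists only of the identity.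
   Context: For a monoid generated by $\{a,b,c\}$ (with no two generators equal, as here), an element $\Delta$ is quasi-central if there is a permutation $\sigma_\Delta$ of $\{a,b,c\}$ with $x\Delta=\Delta\sigma_\Delta(x)$ for all generators $x$; $\mathcal{QZ}$ denotes the set of quasi-central elements. *)

theory Defs
  imports Main
begin

text \<open>Generators a, b, c.  Group words are lists of letters (g, True) = g and (g, False) = g inverse.\<close>
datatype gen = A | B | C

type_synonym letter = "gen \<times> bool"

definition pos :: "gen list \<Rightarrow> letter list" where
  "pos w = map (\<lambda>g. (g, True)) w"

inductive grp_eq :: "(gen list \<times> gen list) set \<Rightarrow> letter list \<Rightarrow> letter list \<Rightarrow> bool"
  for R where
  refl: "grp_eq R u u"
| sym: "grp_eq R u v \<Longrightarrow> grp_eq R v u"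
| trans: "grp_eq R u v \<Longrightarrow> grp_eq R v w \<Longrightarrow> grp_eq R u w"
| rel: "(l, r) \<in> R \<Longrightarrow> grp_eq R (u @ pos l @ v) (u @ pos r @ v)"
| cancel: "grp_eq R (u @ [(x, e), (x, \<not> e)] @ v) (u @ v)"

datatype pres = Bii | Bvi | Hii | Hiii

fun rels :: "pres \<Rightarrow> (gen list \<times> gen list) set" where
  "rels Bii = {([A,B,A,B,A,B], [B,A,B,A,B,A]), ([B,C], [A,B]), ([A,C], [C,A])}"
| "rels Bvi = {([A,B,A], [B,A,B]), ([A,C,A], [B,A,C]), ([A,C,A,C,A], [C,A,C,A,C])}"
| "rels Hii = {([A,B,A,B], [B,A,B,A]), ([A,C,A], [B,A,C]), ([A,C,A,C,A], [C,A,C,A,C])}"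
| "rels Hiii = {([A,B,A], [B,A,B]), ([B,C,B,A], [C,B,A,C]), ([C,B,A], [A,C,B])}"

definition quasi_central :: "pres \<Rightarrow> gen list \<Rightarrow> (gen \<Rightarrow> gen) \<Rightarrow> bool" where
  "quasi_central X w \<sigma> \<longleftrightarrow> bij \<sigma> \<and>
     (\<forall>x. grp_eq (rels X) (pos ([x] @ w)) (pos (w @ [\<sigma> x])))"

end

theory Submission
  imports Defs "HOL-Combinatorics.Permutations"
begin

text \<open>A permutation representation \<open>\<rho>\<close> of \<open>G\<^sub>X\<close> turns the quasi-centrality relations
  \<open>x \<Delta> = \<Delta> \<sigma>(x)\<close> into \<open>\<rho>(x) \<circ> \<rho>(\<Delta>) = \<rho>(\<Delta>) \<circ> \<rho>(\<sigma> x)\<close>. Hence \<open>\<rho>(u)\<close> and \<open>\<rho>(\<sigma> u)\<close> are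
  conjugate for every group word \<open>u\<close> and move equally many points. For each presentation an
  explicit representation in \<open>S\<^sub>4\<close> or \<open>S\<^sub>5\<close> and one or two test words \<open>u\<close> whose
  numbers of moved points differ from those of \<open>\<sigma> u\<close> for every \<open>\<sigma> \<noteq> id\<close> finish the proof.\<close>

fun word_perm :: "(gen \<Rightarrow> 'a \<Rightarrow> 'a) \<Rightarrow> letter list \<Rightarrow> 'a \<Rightarrow> 'a" where
  "word_perm \<rho> [] = id"
| "word_perm \<rho> ((g, e) # w) = (if e then \<rho> g else inv (\<rho> g)) \<circ> word_perm \<rho> w"

definition perm_rep :: "(gen \<Rightarrow> 'a \<Rightarrow> 'a) \<Rightarrow> (gen list \<times> gen list) set \<Rightarrow> bool" where
  "perm_rep \<rho> R \<longleftrightarrow> (\<forall>g. bij (\<rho> g)) \<and> (\<forall>(l, r) \<in> R. word_perm \<rho> (pos l) = word_perm \<rho> (pos r))"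

lemma word_perm_append: "word_perm \<rho> (u @ v) = word_perm \<rho> u \<circ> word_perm \<rho> v"
  by (induction \<rho> u rule: word_perm.induct) (auto simp: comp_assoc)

lemma word_perm_cancel:
  assumes "bij (\<rho> x)"
  shows "word_perm \<rho> [(x, e), (x, \<not> e)] = id"
  using assms by (cases e) (auto simp: fun_eq_iff bij_is_inj bij_is_surj surj_f_inv_f)

lemma word_perm_grp_eq:
  assumes "perm_rep \<rho> R" "grp_eq R u v"
  shows "word_perm \<rho> u = word_perm \<rho> v"
  using assms(2)
proof (induction rule: grp_eq.induct)
  case (rel l r u v)
  then show ?case using assms(1) by (auto simp: perm_rep_def word_perm_append)
next
  case (cancel u x e v)
  have "word_perm \<rho> [(x, e), (x, \<not> e)] = id"
    using assms(1) unfolding perm_rep_def by (blast intro: word_perm_cancel)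
  then show ?case by (simp only: word_perm_append id_comp)
qed auto

lemma bij_word_perm:
  assumes "\<And>g. bij (\<rho> g)"
  shows "bij (word_perm \<rho> w)"
  using assms by (induction \<rho> w rule: word_perm.induct) (auto intro: bij_comp bij_imp_bij_inv)

lemma inv_conj:
  assumes "F \<circ> H = H \<circ> G" "bij F" "bij G"
  shows "inv F \<circ> H = H \<circ> inv G"
proof
  fix y
  obtain z where y: "y = G z" using assms(3) by (rule bij_pointE)
  have "inv F (H y) = inv F (F (H z))" using fun_cong[OF assms(1), of z] y by simp
  also have "\<dots> = H (inv G y)" using assms(2,3) y by (simp add: bij_is_inj)
  finally show "(inv F \<circ> H) y = (H \<circ> inv G) y" by simp
qed

lemma word_perm_conj:
  assumes "\<And>x. \<rho> x \<circ> H = H \<circ> \<rho> (\<sigma> x)" "\<And>x. bij (\<rho> x)" "bij H"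
  shows "word_perm \<rho> u \<circ> H = H \<circ> word_perm \<rho> (map (apfst \<sigma>) u)"
proof (induction u)
  case Nil then show ?case by simp
next
  case (Cons l u)
  obtain x e where l: "l = (x, e)" by fastforce
  have letter: "(if e then \<rho> x else inv (\<rho> x)) \<circ> H = H \<circ> (if e then \<rho> (\<sigma> x) else inv (\<rho> (\<sigma> x)))"
    using assms by (cases e) (auto intro: inv_conj)
  have "word_perm \<rho> (l # u) \<circ> H = (if e then \<rho> x else inv (\<rho> x)) \<circ> (word_perm \<rho> u \<circ> H)"
    by (simp add: l comp_assoc)
  also have "\<dots> = ((if e then \<rho> x else inv (\<rho> x)) \<circ> H) \<circ> word_perm \<rho> (map (apfst \<sigma>) u)"
    by (simp only: Cons.IH comp_assoc)
  also have "\<dots> = H \<circ> word_perm \<rho> (map (apfst \<sigma>) (l # u))"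
    by (simp add: letter l comp_assoc)
  finally show ?case .
qed

definition num_moved :: "('a \<Rightarrow> 'a) \<Rightarrow> nat" where
  "num_moved F = card {x. F x \<noteq> x}"

lemma num_moved_conj:
  assumes "F \<circ> H = H \<circ> G" "bij H"
  shows "num_moved F = num_moved G"
proof -
  have FH: "F (H z) \<noteq> H z \<longleftrightarrow> G z \<noteq> z" for z
    using fun_cong[OF assms(1), of z] assms(2) by (simp add: bij_is_inj inj_eq)
  have "{x. F x \<noteq> x} = H ` {z. G z \<noteq> z}"
  proof
    show "{x. F x \<noteq> x} \<subseteq> H ` {z. G z \<noteq> z}"
    proof
      fix x assume "x \<in> {x. F x \<noteq> x}"
      moreover obtain z where "x = H z" using assms(2) by (rule bij_pointE)
      ultimately show "x \<in> H ` {z. G z \<noteq> z}" using FH by blast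
    qed
  qed (use FH in blast)
  moreover have "inj_on H {z. G z \<noteq> z}"
    using assms(2) bij_is_inj inj_on_subset by blast
  ultimately show ?thesis by (simp add: num_moved_def card_image)
qed

lemma quasi_central_num_moved:
  assumes "perm_rep \<rho> (rels X)" "quasi_central X w \<sigma>"
  shows "num_moved (word_perm \<rho> u) = num_moved (word_perm \<rho> (map (apfst \<sigma>) u))"
proof -
  let ?H = "word_perm \<rho> (pos w)"
  have bij_gen: "bij (\<rho> g)" for g using assms(1) by (simp add: perm_rep_def)
  have "\<rho> x \<circ> ?H = ?H \<circ> \<rho> (\<sigma> x)" for x
  proof -
    have "grp_eq (rels X) (pos ([x] @ w)) (pos (w @ [\<sigma> x]))"
      using assms(2) unfolding quasi_central_def by blast
    then have "word_perm \<rho> (pos ([x] @ w)) = word_perm \<rho> (pos (w @ [\<sigma> x]))"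
      by (rule word_perm_grp_eq[OF assms(1)])
    then show ?thesis by (simp add: pos_def word_perm_append)
  qed
  then have "word_perm \<rho> u \<circ> ?H = ?H \<circ> word_perm \<rho> (map (apfst \<sigma>) u)"
    by (rule word_perm_conj[OF _ bij_gen bij_word_perm[OF bij_gen]])
  then show ?thesis by (rule num_moved_conj[OF _ bij_word_perm[OF bij_gen]])
qed

definition list_perm :: "nat list \<Rightarrow> nat \<Rightarrow> nat" where
  "list_perm p i = (if i < length p then p ! i else i)"

lemma list_perm_nth: "i < length p \<Longrightarrow> list_perm p i = p ! i"
  by (simp add: list_perm_def)

lemma list_perm_comp:
  "length p \<le> length q \<Longrightarrow> list_perm p \<circ> list_perm q = list_perm (map (list_perm p) q)"
  by (auto simp: list_perm_def)

lemma list_perm_permutes: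
  assumes "distinct p" "set p \<subseteq> {..<length p}"
  shows "list_perm p permutes {..<length p}"
proof (rule inj_imp_permutes)
  show "inj_on (list_perm p) {..<length p}"
    using assms(1) by (auto simp: list_perm_def inj_on_def nth_eq_iff_index_eq)
  show "list_perm p i \<in> {..<length p}" if "i \<in> {..<length p}" for i
    using assms(2) that nth_mem by (fastforce simp: list_perm_def)
qed (simp_all add: list_perm_def)

lemma num_moved_list_perm:
  "num_moved (list_perm p) = length (filter (\<lambda>i. p ! i \<noteq> i) [0..<length p])"
proof -
  have "{i. list_perm p i \<noteq> i} = set (filter (\<lambda>i. p ! i \<noteq> i) [0..<length p])"
    by (auto simp: list_perm_def split: if_splits)
  then show ?thesis unfolding num_moved_def by (metis distinct_card distinct_filter distinct_upt)
qed

lemma list_perm_upt: "list_perm [0..<n] = id"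
  by (auto simp: fun_eq_iff list_perm_def)

lemma inv_list_perm:
  assumes "length q = length p" "map (list_perm p) q = [0..<length p]" "map (list_perm q) p = [0..<length p]"
  shows "inv (list_perm p) = list_perm q"
  using assms by (intro inv_unique_comp) (simp_all add: list_perm_comp list_perm_upt)

fun rep :: "pres \<Rightarrow> gen \<Rightarrow> nat \<Rightarrow> nat" where
  "rep Bii A = list_perm [1,0,3,2]"
| "rep Bii B = list_perm [0,2,3,1]"
| "rep Bii C = list_perm [3,2,1,0]"
| "rep Bvi A = list_perm [1,2,3,4,0]"
| "rep Bvi B = list_perm [2,0,4,1,3]"
| "rep Bvi C = list_perm [3,2,0,4,1]"
| "rep Hii A = list_perm [0,1,3,4,2]"
| "rep Hii B = list_perm [0,2,3,1,4]"
| "rep Hii C = list_perm [3,0,2,1,4]"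
| "rep Hiii A = list_perm [1,2,3,4,0]"
| "rep Hiii B = list_perm [2,0,4,1,3]"
| "rep Hiii C = list_perm [2,4,1,0,3]"

lemma bij_rep: "bij (rep X g)"
  by (cases X; cases g) (auto intro!: permutes_bij[OF list_perm_permutes])

lemma perm_rep_rels: "perm_rep (rep X) (rels X)"
  unfolding perm_rep_def
proof (intro conjI allI)
  show "bij (rep X g)" for g by (rule bij_rep)
  show "\<forall>(l, r) \<in> rels X. word_perm (rep X) (pos l) = word_perm (rep X) (pos r)"
    by (cases X; simp add: pos_def; simp add: list_perm_comp; simp add: list_perm_nth)
qed

lemma inv_rep_Bii:
  "inv (rep Bii A) = rep Bii A"
  "inv (rep Bii B) = list_perm [0,3,1,2]"
  "inv (rep Bii C) = rep Bii C"
  unfolding rep.simps by (rule inv_list_perm; simp add: list_perm_nth upt_rec)+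

text \<open>For \<open>Bii\<close> no short positive word separates the swap \<open>a \<leftrightarrow> c\<close> in this representation,
  hence the inverse letter.\<close>

fun test_words :: "pres \<Rightarrow> letter list list" where
  "test_words Bii = [[(A, True), (B, True), (C, True), (B, False)]]"
| "test_words Bvi = [pos [A, C], pos [A, B, C]]"
| "test_words Hii = [pos [A, C, B, B]]"
| "test_words Hiii = [pos [B, C], pos [A, B, C]]"

lemma test_words_force_id:
  assumes "inj \<sigma>"
    and "\<forall>u \<in> set (test_words X). num_moved (word_perm (rep X) u) = num_moved (word_perm (rep X) (map (apfst \<sigma>) u))"
  shows "\<sigma> = id"
proof -
  have "\<sigma> A \<noteq> \<sigma> B" "\<sigma> A \<noteq> \<sigma> C" "\<sigma> B \<noteq> \<sigma> C"
    using assms(1) by (auto dest: injD)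
  then have "\<sigma> A = A \<and> \<sigma> B = B \<and> \<sigma> C = C"
    using assms(2) \<comment> \<open>the inverses must be rewritten before \<open>rep\<close> is unfolded\<close>
    by (cases X; cases "\<sigma> A"; cases "\<sigma> B"; cases "\<sigma> C";
        simp add: pos_def inv_rep_Bii del: rep.simps;
        simp add: list_perm_comp; simp add: num_moved_list_perm list_perm_nth upt_rec)
  then show ?thesis by (metis eq_id_iff gen.exhaust)
qed

theorem mainTheorem10:
  fixes X :: pres and w :: "gen list" and \<sigma> :: "gen \<Rightarrow> gen"
  assumes "quasi_central X w \<sigma>"
  shows "\<sigma> = id"
proof (rule test_words_force_id)
  show "inj \<sigma>" using assms by (simp add: quasi_central_def bij_is_inj)
  show "\<forall>u \<in> set (test_words X).
      num_moved (word_perm (rep X) u) = num_moved (word_perm (rep X) (map (apfst \<sigma>) u))"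
    using quasi_central_num_moved[OF perm_rep_rels assms] by blast
qed

end
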